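(* Let $E$ be a finite set of events, each with a timestamp $\tau(e)\in\mathbb{R}$, let $t_w>0$ be a real number and $n\ge 1$ an integer. Let $\mathcal{I}\subseteq 2^E$ consist of all $T\subseteq E$ such that for every $t\in\mathbb{R}$, $|\{e\in T:\tau(e)\in[t,t+t_w)\}|\le n$. Then $(E,\mathcal{I})$ is a $p$-system with $p=2$.
   Context: An independence family $\mathcal{I}\subseteq 2^X$ is a downward-closed family of subsets of $X$. For $Y\subseteq X$, a base of $Y$ is a maximal (with respect to inclusion) set $J\subseteq Y$ with $J\in\mathcal{I}$, i.e. $J\in\mathcal{I}$ and $J\cup\{e\}\notin\mathcal{I}$ for every $e\in Y\setminus J$. $(X,\mathcal{I})$ is a $p$-system if for every $Y\subseteq X$, the maximum cardinality of a base of $Y$ is at most $p$ times the minimum cardinality of a base of $Y$. *)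

theory Defs
  imports Complex_Main
begin

definition indep_family :: "'a set \<Rightarrow> 'a set set \<Rightarrow> bool" where
  "indep_family X I \<longleftrightarrow> I \<subseteq> Pow X \<and> (\<forall>A\<in>I. \<forall>B. B \<subseteq> A \<longrightarrow> B \<in> I)"

definition is_base :: "'a set set \<Rightarrow> 'a set \<Rightarrow> 'a set \<Rightarrow> bool" where
  "is_base I Y J \<longleftrightarrow> J \<subseteq> Y \<and> J \<in> I \<and> (\<forall>e \<in> Y - J. insert e J \<notin> I)"

definition p_system :: "'a set \<Rightarrow> 'a set set \<Rightarrow> nat \<Rightarrow> bool" where
  "p_system X I p \<longleftrightarrow> finite X \<and> indep_family X I \<and>
     (\<forall>Y \<subseteq> X. Max (card ` {J. is_base I Y J}) \<le> p * Min (card ` {J. is_base I Y J}))"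

end

theory Submission
  imports Defs
begin

text \<open>Let \<open>K\<close> be independent and \<open>J\<close> a base of the same set. By maximality of \<open>J\<close>,
  every \<open>e \<in> K - J\<close> lies in a window of length \<open>t_w\<close> that already holds \<open>n\<close> elements of \<open>J\<close>.
  Induction on \<open>|K \<inter> [a,\<infinity>)|\<close> shows
  \<open>|K \<inter> [a,\<infinity>)| \<le> |J \<inter> [a,\<infinity>)| + |J \<inter> (a - t_w,\<infinity>)|\<close> for every \<open>a\<close>: if \<open>x \<ge> a\<close> is the
  leftmost time of an element of \<open>K - J\<close>, then \<open>K \<inter> [a,x) \<subseteq> J\<close>, the window \<open>[x, x + t_w)\<close>
  holds at most \<open>n\<close> elements of \<open>K\<close>, and these are paid for by the \<open>n\<close> elements of \<open>J\<close> in the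
  blocking window of \<open>x\<close>, which lies in \<open>(x - t_w, x + t_w)\<close>; the induction hypothesis
  covers \<open>[x + t_w,\<infinity>)\<close>. Taking \<open>a\<close> below all times
  gives \<open>|K| \<le> 2 |J|\<close>.\<close>

lemma card_filter_split:
  assumes "finite A"
    and "\<And>x. x \<in> A \<Longrightarrow> P x \<longleftrightarrow> Q x \<or> R x"
    and "\<And>x. x \<in> A \<Longrightarrow> \<not> (Q x \<and> R x)"
  shows "card {x \<in> A. P x} = card {x \<in> A. Q x} + card {x \<in> A. R x}"
proof -
  have "{x \<in> A. P x} = {x \<in> A. Q x} \<union> {x \<in> A. R x}" using assms(2) by blast
  moreover have "{x \<in> A. Q x} \<inter> {x \<in> A. R x} = {}" using assms(3) by blast
  ultimately show ?thesis using assms(1) by (simp add: card_Un_disjoint)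
qed

lemma is_base_exists:
  assumes "finite Y" and "{} \<in> I"
  shows "\<exists>J. is_base I Y J"
proof -
  let ?C = "{J. J \<subseteq> Y \<and> J \<in> I}"
  have "finite ?C" using assms(1) finite_subset[of ?C "Pow Y"] by blast
  moreover have "?C \<noteq> {}" using assms(2) by blast
  ultimately obtain J where J: "J \<in> ?C" and maximal: "\<forall>J' \<in> ?C. J \<subseteq> J' \<longrightarrow> J = J'"
    by (meson finite_has_maximal)
  have "insert e J \<notin> I" if "e \<in> Y - J" for e
  proof
    assume "insert e J \<in> I"
    then have "insert e J \<in> ?C" using J that by blast
    then have "J = insert e J" using maximal by blast
    with that show False by blast
  qed
  then show ?thesis using J unfolding is_base_def by blast
qed

lemma p_systemI:
  assumes "finite X" and "indep_family X I" and "{} \<in> I"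
    and "\<And>Y J K. Y \<subseteq> X \<Longrightarrow> is_base I Y J \<Longrightarrow> is_base I Y K \<Longrightarrow> card K \<le> p * card J"
  shows "p_system X I p"
proof -
  have "Max (card ` {J. is_base I Y J}) \<le> p * Min (card ` {J. is_base I Y J})" if Y: "Y \<subseteq> X" for Y
  proof -
    let ?B = "{J. is_base I Y J}"
    have fin: "finite Y" using assms(1) Y by (rule finite_subset[rotated])
    have "finite ?B" using fin finite_subset[of ?B "Pow Y"] by (auto simp: is_base_def)
    moreover have "?B \<noteq> {}" using is_base_exists[OF fin assms(3)] by blast
    ultimately have "Max (card ` ?B) \<in> card ` ?B" and "Min (card ` ?B) \<in> card ` ?B"
      by (simp_all add: Max_in Min_in)
    then obtain K J where "is_base I Y K" "card K = Max (card ` ?B)"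
      and "is_base I Y J" "card J = Min (card ` ?B)"
      by (metis (no_types, lifting) imageE mem_Collect_eq)
    with assms(4)[OF Y] show ?thesis by metis
  qed
  with assms(1,2) show ?thesis unfolding p_system_def by blast
qed

definition window_family :: "'a set \<Rightarrow> ('a \<Rightarrow> real) \<Rightarrow> real \<Rightarrow> nat \<Rightarrow> 'a set set" where
  "window_family E \<tau> w n =
     {T. T \<subseteq> E \<and> (\<forall>t. card {e \<in> T. t \<le> \<tau> e \<and> \<tau> e < t + w} \<le> n)}"

lemma indep_family_window_family:
  assumes "finite E"
  shows "indep_family E (window_family E \<tau> w n)"
  unfolding indep_family_def
proof (intro conjI ballI allI impI)
  fix A B assume A: "A \<in> window_family E \<tau> w n" and BA: "B \<subseteq> A"
  have "finite A" using A assms finite_subset by (auto simp: window_family_def)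
  have "card {e \<in> B. t \<le> \<tau> e \<and> \<tau> e < t + w} \<le> n" for t
  proof -
    have "card {e \<in> B. t \<le> \<tau> e \<and> \<tau> e < t + w} \<le> card {e \<in> A. t \<le> \<tau> e \<and> \<tau> e < t + w}"
      using \<open>finite A\<close> BA by (auto intro!: card_mono)
    also have "\<dots> \<le> n" using A by (simp add: window_family_def)
    finally show ?thesis .
  qed
  with A BA show "B \<in> window_family E \<tau> w n" by (auto simp: window_family_def)
qed (auto simp: window_family_def)

lemma empty_in_window_family: "{} \<in> window_family E \<tau> w n"
  by (simp add: window_family_def)

lemma window_family_blocking_window:
  assumes "finite J" and "J \<in> window_family E \<tau> w n"
    and "e \<in> E" and "insert e J \<notin> window_family E \<tau> w n"
  shows "\<exists>t. t \<le> \<tau> e \<and> \<tau> e < t + w \<and> n \<le> card {y \<in> J. t \<le> \<tau> y \<and> \<tau> y < t + w}"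
proof -
  have JE: "J \<subseteq> E" and J: "\<And>t. card {y \<in> J. t \<le> \<tau> y \<and> \<tau> y < t + w} \<le> n"
    using assms(2) by (auto simp: window_family_def)
  obtain t where t: "n < card {y \<in> insert e J. t \<le> \<tau> y \<and> \<tau> y < t + w}"
    using assms(3,4) JE by (auto simp: window_family_def not_le)
  have "t \<le> \<tau> e \<and> \<tau> e < t + w"
  proof (rule ccontr)
    assume "\<not> ?thesis"
    then have "{y \<in> insert e J. t \<le> \<tau> y \<and> \<tau> y < t + w} = {y \<in> J. t \<le> \<tau> y \<and> \<tau> y < t + w}"
      by auto
    with t J[of t] show False by simp
  qed
  moreover have "card {y \<in> insert e J. t \<le> \<tau> y \<and> \<tau> y < t + w}
      \<le> card (insert e {y \<in> J. t \<le> \<tau> y \<and> \<tau> y < t + w})"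
    using assms(1) by (intro card_mono) auto
  ultimately show ?thesis using t assms(1) by (auto simp: card_insert_if split: if_splits)
qed

lemma card_tail_step:
  fixes \<tau> :: "'a \<Rightarrow> real"
  assumes "finite K" and "finite J" and "a \<le> x" and "0 < w"
    and K_window: "card {e \<in> K. x \<le> \<tau> e \<and> \<tau> e < x + w} \<le> n"
    and K_before: "{e \<in> K. a \<le> \<tau> e \<and> \<tau> e < x} \<subseteq> J"
    and blocking: "t \<le> x" "x < t + w" "n \<le> card {e \<in> J. t \<le> \<tau> e \<and> \<tau> e < t + w}"
    and tail: "card {e \<in> K. x + w \<le> \<tau> e} \<le> card {e \<in> J. x + w \<le> \<tau> e} + card {e \<in> J. x < \<tau> e}"
  shows "card {e \<in> K. a \<le> \<tau> e} \<le> card {e \<in> J. a \<le> \<tau> e} + card {e \<in> J. a - w < \<tau> e}"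
proof -
  have split_K: "card {e \<in> K. a \<le> \<tau> e} = card {e \<in> K. a \<le> \<tau> e \<and> \<tau> e < x}
      + card {e \<in> K. x \<le> \<tau> e \<and> \<tau> e < x + w} + card {e \<in> K. x + w \<le> \<tau> e}"
  proof -
    have "card {e \<in> K. a \<le> \<tau> e} = card {e \<in> K. a \<le> \<tau> e \<and> \<tau> e < x} + card {e \<in> K. x \<le> \<tau> e}"
      using \<open>finite K\<close> \<open>a \<le> x\<close> by (intro card_filter_split) auto
    moreover have "card {e \<in> K. x \<le> \<tau> e}
        = card {e \<in> K. x \<le> \<tau> e \<and> \<tau> e < x + w} + card {e \<in> K. x + w \<le> \<tau> e}"
      using \<open>finite K\<close> \<open>0 < w\<close> by (intro card_filter_split) auto
    ultimately show ?thesis by simp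
  qed
  have split_J: "card {e \<in> J. a \<le> \<tau> e} = card {e \<in> J. a \<le> \<tau> e \<and> \<tau> e < x}
      + card {e \<in> J. x \<le> \<tau> e \<and> \<tau> e < x + w} + card {e \<in> J. x + w \<le> \<tau> e}"
  proof -
    have "card {e \<in> J. a \<le> \<tau> e} = card {e \<in> J. a \<le> \<tau> e \<and> \<tau> e < x} + card {e \<in> J. x \<le> \<tau> e}"
      using \<open>finite J\<close> \<open>a \<le> x\<close> by (intro card_filter_split) auto
    moreover have "card {e \<in> J. x \<le> \<tau> e}
        = card {e \<in> J. x \<le> \<tau> e \<and> \<tau> e < x + w} + card {e \<in> J. x + w \<le> \<tau> e}"
      using \<open>finite J\<close> \<open>0 < w\<close> by (intro card_filter_split) auto
    ultimately show ?thesis by simp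
  qed
  have split_J': "card {e \<in> J. a - w < \<tau> e} = card {e \<in> J. a - w < \<tau> e \<and> \<tau> e < x} + card {e \<in> J. x \<le> \<tau> e}"
    using \<open>finite J\<close> \<open>a \<le> x\<close> \<open>0 < w\<close> by (intro card_filter_split) auto
  have "{e \<in> J. t \<le> \<tau> e \<and> \<tau> e < t + w}
      \<subseteq> {e \<in> J. a - w < \<tau> e \<and> \<tau> e < x} \<union> {e \<in> J. x \<le> \<tau> e \<and> \<tau> e < x + w}"
    using blocking(1,2) \<open>a \<le> x\<close> by auto
  then have "card {e \<in> J. t \<le> \<tau> e \<and> \<tau> e < t + w}
      \<le> card ({e \<in> J. a - w < \<tau> e \<and> \<tau> e < x} \<union> {e \<in> J. x \<le> \<tau> e \<and> \<tau> e < x + w})"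
    using \<open>finite J\<close> by (simp add: card_mono)
  also have "\<dots> \<le> card {e \<in> J. a - w < \<tau> e \<and> \<tau> e < x} + card {e \<in> J. x \<le> \<tau> e \<and> \<tau> e < x + w}"
    by (rule card_Un_le)
  finally have n_le: "n \<le> \<dots>" using blocking(3) by linarith
  have "card {e \<in> K. a \<le> \<tau> e \<and> \<tau> e < x} \<le> card {e \<in> J. a \<le> \<tau> e \<and> \<tau> e < x}"
    using K_before \<open>finite J\<close> by (intro card_mono) auto
  moreover have "card {e \<in> J. x < \<tau> e} \<le> card {e \<in> J. x \<le> \<tau> e}"
    using \<open>finite J\<close> by (intro card_mono) auto
  ultimately show ?thesis using split_K split_J split_J' n_le K_window tail by linarith
qed

lemma card_tail_le_if_blocked:
  fixes \<tau> :: "'a \<Rightarrow> real"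
  assumes "finite K" and "finite J" and "w > 0"
    and K_windows: "\<And>t. card {e \<in> K. t \<le> \<tau> e \<and> \<tau> e < t + w} \<le> n"
    and blocked: "\<And>e. e \<in> K - J \<Longrightarrow>
      \<exists>t. t \<le> \<tau> e \<and> \<tau> e < t + w \<and> n \<le> card {y \<in> J. t \<le> \<tau> y \<and> \<tau> y < t + w}"
  shows "card {e \<in> K. a \<le> \<tau> e} \<le> card {e \<in> J. a \<le> \<tau> e} + card {e \<in> J. a - w < \<tau> e}"
proof (induction "card {e \<in> K. a \<le> \<tau> e}" arbitrary: a rule: less_induct)
  case less
  let ?B = "{e \<in> K - J. a \<le> \<tau> e}"
  show ?case
  proof (cases "?B = {}")
    case True
    then have "card {e \<in> K. a \<le> \<tau> e} \<le> card {e \<in> J. a \<le> \<tau> e}"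
      using \<open>finite J\<close> by (auto intro!: card_mono)
    then show ?thesis by linarith
  next
    case False
    define x where "x = Min (\<tau> ` ?B)"
    have "finite ?B" using \<open>finite K\<close> by simp
    then have "x \<in> \<tau> ` ?B" and x_min: "\<And>e. e \<in> ?B \<Longrightarrow> x \<le> \<tau> e"
      using False by (simp_all add: x_def)
    then obtain e where e: "e \<in> ?B" "\<tau> e = x" by blast
    obtain t where t: "t \<le> x" "x < t + w" "n \<le> card {y \<in> J. t \<le> \<tau> y \<and> \<tau> y < t + w}"
      using blocked[of e] e by auto
    have "{e \<in> K. x + w \<le> \<tau> e} \<subset> {e \<in> K. a \<le> \<tau> e}"
      using e \<open>w > 0\<close> by force
    then have "card {e \<in> K. x + w \<le> \<tau> e} < card {e \<in> K. a \<le> \<tau> e}"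
      using \<open>finite K\<close> by (simp add: psubset_card_mono)
    then have tail: "card {e \<in> K. x + w \<le> \<tau> e} \<le> card {e \<in> J. x + w \<le> \<tau> e} + card {e \<in> J. x < \<tau> e}"
      using less by fastforce
    have "{e \<in> K. a \<le> \<tau> e \<and> \<tau> e < x} \<subseteq> J"
      using x_min by force
    with card_tail_step[OF \<open>finite K\<close> \<open>finite J\<close> _ _ K_windows _ t tail] \<open>w > 0\<close> e show ?thesis
      by simp
  qed
qed

lemma card_le_twice_if_blocked:
  fixes \<tau> :: "'a \<Rightarrow> real"
  assumes "finite K" and "finite J" and "w > 0"
    and "\<And>t. card {e \<in> K. t \<le> \<tau> e \<and> \<tau> e < t + w} \<le> n"
    and "\<And>e. e \<in> K - J \<Longrightarrow>
      \<exists>t. t \<le> \<tau> e \<and> \<tau> e < t + w \<and> n \<le> card {y \<in> J. t \<le> \<tau> y \<and> \<tau> y < t + w}"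
  shows "card K \<le> 2 * card J"
proof -
  define a where "a = Min (\<tau> ` (K \<union> J))"
  have a_le: "a \<le> \<tau> e" if "e \<in> K \<union> J" for e
    using that assms(1,2) by (simp add: a_def)
  have "{e \<in> K. a \<le> \<tau> e} = K" "{e \<in> J. a \<le> \<tau> e} = J" "{e \<in> J. a - w < \<tau> e} = J"
    using a_le \<open>w > 0\<close> by force+
  with card_tail_le_if_blocked[OF assms, of a] show ?thesis by simp
qed

lemma window_family_card_le_twice_base:
  assumes "finite E" and "w > 0" and "K \<in> window_family E \<tau> w n" and "K \<subseteq> Y"
    and "is_base (window_family E \<tau> w n) Y J" and "Y \<subseteq> E"
  shows "card K \<le> 2 * card J"
proof (rule card_le_twice_if_blocked)
  have "K \<subseteq> E" "J \<subseteq> E" using assms(4-6) by (auto simp: is_base_def)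
  then show "finite K" "finite J" using \<open>finite E\<close> finite_subset by auto
  show "card {e \<in> K. t \<le> \<tau> e \<and> \<tau> e < t + w} \<le> n" for t
    using assms(3) by (simp add: window_family_def)
  show "\<exists>t. t \<le> \<tau> e \<and> \<tau> e < t + w \<and> n \<le> card {y \<in> J. t \<le> \<tau> y \<and> \<tau> y < t + w}"
    if "e \<in> K - J" for e
  proof (rule window_family_blocking_window[OF \<open>finite J\<close>])
    show "J \<in> window_family E \<tau> w n" "insert e J \<notin> window_family E \<tau> w n" "e \<in> E"
      using that assms(4-6) by (auto simp: is_base_def)
  qed
qed (fact \<open>w > 0\<close>)

theorem theorem2:
  fixes E :: "'a set" and \<tau> :: "'a \<Rightarrow> real" and t_w :: real and n :: nat
  assumes "finite E" and "t_w > 0" and "n \<ge> 1"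
  defines "\<I> \<equiv> {T. T \<subseteq> E \<and> (\<forall>t::real. card {e \<in> T. t \<le> \<tau> e \<and> \<tau> e < t + t_w} \<le> n)}"
  shows "p_system E \<I> 2"
proof -
  have "\<I> = window_family E \<tau> t_w n" by (simp add: \<I>_def window_family_def)
  moreover have "p_system E (window_family E \<tau> t_w n) 2"
  proof (rule p_systemI)
    show "card K \<le> 2 * card J"
      if "Y \<subseteq> E" "is_base (window_family E \<tau> t_w n) Y J" "is_base (window_family E \<tau> t_w n) Y K"
      for Y J K
      using window_family_card_le_twice_base[OF assms(1,2)] that by (auto simp: is_base_def)
  qed (simp_all add: assms(1) indep_family_window_family empty_in_window_family)
  ultimately show ?thesis by simp
qed

end
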